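(* Let $w_1,\dots,w_n$ be real weights, and let $a_1\ge\cdots\ge a_n$ and $b_1\ge\cdots\ge b_n$ be real numbers in $[a,b]$ such that $\min(a_i,b_i)\ge\max(a_{i+1},b_{i+1})$ for $1\le i<n$, \[ \sum_{i=1}^n w_ia_i=\sum_{i=1}^n w_ib_i,\qquad \sum_{i=1}^n w_ia_i^2=\sum_{i=1}^n w_ib_i^2, \] and \[ \sum_{i=1}^j w_i(a_i-a_{j+1})(a_i-b_{j+1})\ge\sum_{i=1}^j w_i(b_i-a_{j+1})(b_i-b_{j+1})\quad\text{for all }1\le j<n. \] Then $\sum_{i=1}^n w_if(a_i)\ge\sum_{i=1}^n w_if(b_i)$ for every three times differentiable $f:[a,b]\to\mathbb{R}$ with $f'''\ge 0$. *)

theory Defs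
  imports "HOL-Analysis.Analysis"
begin

end

theory Submission
  imports Defs
begin

(* Taylor's formula with integral remainder writes
     f x = T x + integral over [lo, hi] of (x - t)_+^2 / 2 * f''' t dt
   with T a quadratic polynomial.  The two moment conditions make the weighted
   sums of T over the a_i and over the b_i coincide, so the claim reduces to the
   nonnegativity, for every t, of the truncated gap
     Phi(t) = sum_i w_i ((a_i - t)_+^2 - (b_i - t)_+^2).
   To prove Phi >= 0 we use the partial gaps
     L_j(t) = sum_{i <= j} w_i ((a_i - t)^2 - (b_i - t)^2),
   which are affine in t.  The partial hypotheses say L_j >= 0 at the midpoint
   m_{j+1} of a_{j+1}, b_{j+1}; the j-th summand vanishes at m_j, so also
   L_j(m_j) = L_{j-1}(m_j) >= 0; hence L_j >= 0 on [m_{j+1}, m_j], and L_n = 0.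
   By interlacing, the indices with t < min(a_i, b_i) form a prefix 1..k and all
   indices beyond k+1 contribute nothing, so Phi(t) is L_k(t) plus at most the
   single crossing term of index k+1, handled by an elementary lemma about one
   quadratic term added to an affine function. *)

section \<open>Taylor's formula with truncated-power remainder\<close>

(* Second-order Taylor expansion at lo, with the remainder as an integral over the
   whole interval [lo, hi]; the kernel (x - t)_+^2 vanishes for t >= x. *)
lemma taylor2_truncated_remainder:
  fixes f f' f'' f''' :: "real \<Rightarrow> real" and lo hi x :: real
  assumes d1: "\<And>x. x \<in> {lo..hi} \<Longrightarrow> (f has_real_derivative f' x) (at x within {lo..hi})"
    and d2: "\<And>x. x \<in> {lo..hi} \<Longrightarrow> (f' has_real_derivative f'' x) (at x within {lo..hi})"
    and d3: "\<And>x. x \<in> {lo..hi} \<Longrightarrow> (f'' has_real_derivative f''' x) (at x within {lo..hi})"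
    and x: "x \<in> {lo..hi}"
  shows "((\<lambda>t. (max (x - t) 0)\<^sup>2 / 2 * f''' t) has_integral
           f x - (f lo + f' lo * (x - lo) + f'' lo / 2 * (x - lo)\<^sup>2)) {lo..hi}"
proof -
  define D where "D m = (if m = 0 then f else if m = 1 then f' else if m = 2 then f'' else f''')"
    for m :: nat
  have sub: "{lo..x} \<subseteq> {lo..hi}" using x by auto
  have D_deriv: "(D m has_vector_derivative D (Suc m) t) (at t within {lo..x})"
    if "m < 3" "lo \<le> t" "t \<le> x" for m t
  proof -
    have t: "t \<in> {lo..hi}" using that x by auto
    have "m = 0 \<or> m = 1 \<or> m = 2" using that by auto
    then have "(D m has_real_derivative D (Suc m) t) (at t within {lo..hi})"
      using d1[OF t] d2[OF t] d3[OF t] by (auto simp: D_def)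
    then show ?thesis
      by (simp add: has_real_derivative_iff_has_vector_derivative
                    has_vector_derivative_within_subset[OF _ sub])
  qed
  have poly: "(\<Sum>i<3. ((x - lo) ^ i / fact i) *\<^sub>R D i lo)
      = f lo + f' lo * (x - lo) + f'' lo / 2 * (x - lo)\<^sup>2"
    by (simp add: D_def numeral_3_eq_3 lessThan_Suc eval_nat_numeral)
  have "((\<lambda>t. ((x - t) ^ (3 - 1) / fact (3 - 1)) *\<^sub>R D 3 t) has_integral
      f x - (\<Sum>i<3. ((x - lo) ^ i / fact i) *\<^sub>R D i lo)) {lo..x}"
    by (rule Taylor_has_integral[of 3 D f]) (use D_deriv x in \<open>auto simp: D_def\<close>)
  then have left: "((\<lambda>t. (max (x - t) 0)\<^sup>2 / 2 * f''' t) has_integral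
      f x - (f lo + f' lo * (x - lo) + f'' lo / 2 * (x - lo)\<^sup>2)) {lo..x}"
    unfolding poly by (rule has_integral_eq[rotated]) (auto simp: D_def max_def)
  have right: "((\<lambda>t. (max (x - t) 0)\<^sup>2 / 2 * f''' t) has_integral 0) {x..hi}"
    by (rule has_integral_is_0) (auto simp: max_def)
  show ?thesis
    using has_integral_combine[OF _ _ left right] x by simp
qed

lemma quadratic_moments_equal:
  fixes w a b :: "nat \<Rightarrow> real" and I :: "nat set" and c0 c1 c2 s :: real
  assumes m1: "(\<Sum>i\<in>I. w i * a i) = (\<Sum>i\<in>I. w i * b i)"
    and m2: "(\<Sum>i\<in>I. w i * (a i)\<^sup>2) = (\<Sum>i\<in>I. w i * (b i)\<^sup>2)"
  shows "(\<Sum>i\<in>I. w i * (c0 + c1 * (a i - s) + c2 * (a i - s)\<^sup>2))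
       = (\<Sum>i\<in>I. w i * (c0 + c1 * (b i - s) + c2 * (b i - s)\<^sup>2))"
proof -
  have expand: "(\<Sum>i\<in>I. w i * (c0 + c1 * (x i - s) + c2 * (x i - s)\<^sup>2))
      = (c0 - c1 * s + c2 * s\<^sup>2) * (\<Sum>i\<in>I. w i) + (c1 - 2 * c2 * s) * (\<Sum>i\<in>I. w i * x i)
        + c2 * (\<Sum>i\<in>I. w i * (x i)\<^sup>2)" for x :: "nat \<Rightarrow> real"
    by (simp add: sum_distrib_left sum.distrib[symmetric] power2_eq_square algebra_simps)
  show ?thesis unfolding expand m1 m2 ..
qed

lemma affine_nonneg_between:
  fixes A B x y t :: real
  assumes "x \<le> t" "t \<le> y" "A - x * B \<ge> 0" "A - y * B \<ge> 0"
  shows "A - t * B \<ge> 0"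
proof (cases "B \<ge> 0")
  case True
  then have "t * B \<le> y * B" using assms by (simp add: mult_right_mono)
  then show ?thesis using assms by linarith
next
  case False
  then have "t * B \<le> x * B" using assms by (simp add: mult_right_mono_neg)
  then show ?thesis using assms by linarith
qed

(* One quadratic term w (x - t)^2 added to an affine function l(t) = A - tB, for
   y <= t <= x: if l >= 0 on the upper half [m, x] (m the midpoint) and
   l(u) + w((x-u)^2 - (y-u)^2) >= 0 on the lower half [y, m], the sum is >= 0.
   For w >= 0 this is immediate; for w < 0 bound (x-t)^2 by the chord (x-t)(x-y)
   and use the affine case at the endpoints y and x. *)
lemma crossing_term_nonneg_ordered:
  fixes A B w x y t :: real
  assumes t: "y \<le> t" "t \<le> x"
    and upper: "\<And>u. (x + y) / 2 \<le> u \<Longrightarrow> u \<le> x \<Longrightarrow> A - u * B \<ge> 0"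
    and lower: "\<And>u. y \<le> u \<Longrightarrow> u \<le> (x + y) / 2 \<Longrightarrow>
                  A - u * B + w * ((x - u)\<^sup>2 - (y - u)\<^sup>2) \<ge> 0"
  shows "A - t * B + w * (x - t)\<^sup>2 \<ge> 0"
proof (cases "w \<ge> 0")
  case w: True
  show ?thesis
  proof (cases "(x + y) / 2 \<le> t")
    case True
    then show ?thesis using upper[of t] t w by simp
  next
    case False
    have "w * (y - t)\<^sup>2 \<ge> 0" using w by simp
    then show ?thesis using lower[of t] t False by (simp add: algebra_simps)
  qed
next
  case w: False
  have "(x - t)\<^sup>2 \<le> (x - t) * (x - y)"
    using t by (simp add: power2_eq_square mult_left_mono)
  then have chord: "w * (x - t)\<^sup>2 \<ge> w * ((x - t) * (x - y))"
    using w by (simp add: mult_left_mono_neg)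
  have "(A + w * x * (x - y)) - t * (B + w * (x - y)) \<ge> 0"
  proof (rule affine_nonneg_between[OF t])
    show "(A + w * x * (x - y)) - y * (B + w * (x - y)) \<ge> 0"
      using lower[of y] t by (simp add: algebra_simps power2_eq_square)
    show "(A + w * x * (x - y)) - x * (B + w * (x - y)) \<ge> 0"
      using upper[of x] t by (simp add: algebra_simps)
  qed
  then show ?thesis using chord by (simp add: algebra_simps)
qed

(* The same for an arbitrary pair x, y, with truncated squares; the case x < y
   reduces to the ordered one by swapping x and y and negating w. *)
lemma crossing_term_nonneg:
  fixes A B w x y t :: real
  assumes t: "min x y \<le> t" "t \<le> max x y"
    and upper: "\<And>u. (x + y) / 2 \<le> u \<Longrightarrow> u \<le> max x y \<Longrightarrow> A - u * B \<ge> 0"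
    and lower: "\<And>u. min x y \<le> u \<Longrightarrow> u \<le> (x + y) / 2 \<Longrightarrow>
                  A - u * B + w * ((x - u)\<^sup>2 - (y - u)\<^sup>2) \<ge> 0"
  shows "A - t * B + w * ((max (x - t) 0)\<^sup>2 - (max (y - t) 0)\<^sup>2) \<ge> 0"
proof (cases "y \<le> x")
  case True
  have "(max (x - t) 0)\<^sup>2 - (max (y - t) 0)\<^sup>2 = (x - t)\<^sup>2" using t True by (auto simp: max_def)
  moreover have "A - t * B + w * (x - t)\<^sup>2 \<ge> 0"
    by (rule crossing_term_nonneg_ordered) (use t upper lower True in auto)
  ultimately show ?thesis by simp
next
  case False
  have "(max (x - t) 0)\<^sup>2 - (max (y - t) 0)\<^sup>2 = - (y - t)\<^sup>2" using t False by (auto simp: max_def)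
  moreover have "A - t * B + (- w) * (y - t)\<^sup>2 \<ge> 0"
  proof (rule crossing_term_nonneg_ordered)
    show "A - u * B + - w * ((y - u)\<^sup>2 - (x - u)\<^sup>2) \<ge> 0"
      if "x \<le> u" "u \<le> (y + x) / 2" for u
      using lower[of u] that False by (simp add: algebra_simps)
  qed (use t upper False in \<open>auto simp: add.commute\<close>)
  ultimately show ?thesis by simp
qed

lemma maximal_prefix:
  fixes P :: "nat \<Rightarrow> bool" and n :: nat
  shows "\<exists>k\<le>n. (\<forall>i\<in>{1..k}. P i) \<and> (k < n \<longrightarrow> \<not> P (k + 1))"
proof (induction n)
  case 0
  then show ?case by simp
next
  case (Suc n)
  then obtain k where k: "k \<le> n" "\<forall>i\<in>{1..k}. P i" "k < n \<longrightarrow> \<not> P (k + 1)" by blast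
  show ?case
  proof (cases "k = n \<and> P (n + 1)")
    case True
    then show ?thesis using k by (intro exI[of _ "Suc n"]) (auto simp: le_Suc_eq)
  next
    case False
    then show ?thesis using k by (intro exI[of _ k]) auto
  qed
qed

section \<open>Partial gaps under interlacing\<close>

(* The j-th partial gap L_j(t); it is affine in t because the t^2 terms cancel. *)
definition partial_gap :: "(nat \<Rightarrow> real) \<Rightarrow> (nat \<Rightarrow> real) \<Rightarrow> (nat \<Rightarrow> real) \<Rightarrow> nat \<Rightarrow> real \<Rightarrow> real"
  where "partial_gap w a b j t = (\<Sum>i=1..j. w i * ((a i - t)\<^sup>2 - (b i - t)\<^sup>2))"

lemma partial_gap_affine:
  "partial_gap w a b j t
     = (\<Sum>i=1..j. w i * ((a i)\<^sup>2 - (b i)\<^sup>2)) - t * (2 * (\<Sum>i=1..j. w i * (a i - b i)))"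
proof -
  have "partial_gap w a b j t
      = (\<Sum>i=1..j. w i * ((a i)\<^sup>2 - (b i)\<^sup>2) - t * (2 * (w i * (a i - b i))))"
    unfolding partial_gap_def by (rule sum.cong) (auto simp: power2_eq_square algebra_simps)
  then show ?thesis by (simp add: sum_subtractf sum_distrib_left)
qed

lemma partial_gap_Suc:
  "partial_gap w a b (Suc j) t
     = partial_gap w a b j t + w (Suc j) * ((a (Suc j) - t)\<^sup>2 - (b (Suc j) - t)\<^sup>2)"
  unfolding partial_gap_def by simp

definition truncated_gap :: "(nat \<Rightarrow> real) \<Rightarrow> (nat \<Rightarrow> real) \<Rightarrow> (nat \<Rightarrow> real) \<Rightarrow> nat \<Rightarrow> real \<Rightarrow> real"
  where "truncated_gap w a b n t
           = (\<Sum>i=1..n. w i * ((max (a i - t) 0)\<^sup>2 - (max (b i - t) 0)\<^sup>2))"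

locale interlaced_moments =
  fixes n :: nat and w a b :: "nat \<Rightarrow> real"
  assumes interlace: "\<And>i. 1 \<le> i \<Longrightarrow> i < n \<Longrightarrow> min (a i) (b i) \<ge> max (a (i + 1)) (b (i + 1))"
    and moment1: "(\<Sum>i=1..n. w i * a i) = (\<Sum>i=1..n. w i * b i)"
    and moment2: "(\<Sum>i=1..n. w i * (a i)\<^sup>2) = (\<Sum>i=1..n. w i * (b i)\<^sup>2)"
    and partial: "\<And>j. 1 \<le> j \<Longrightarrow> j < n \<Longrightarrow>
         (\<Sum>i=1..j. w i * (a i - a (j + 1)) * (a i - b (j + 1)))
           \<ge> (\<Sum>i=1..j. w i * (b i - a (j + 1)) * (b i - b (j + 1)))"
begin

abbreviation mid :: "nat \<Rightarrow> real" where "mid i \<equiv> (a i + b i) / 2"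

lemma interlace_trans:
  assumes "1 \<le> i" "i < k" "k \<le> n"
  shows "max (a k) (b k) \<le> min (a i) (b i)"
  using assms
proof (induction k)
  case 0
  then show ?case by simp
next
  case (Suc k)
  show ?case
  proof (cases "i = k")
    case True
    then show ?thesis using interlace[of i] Suc.prems by simp
  next
    case False
    then have "max (a k) (b k) \<le> min (a i) (b i)" using Suc by simp
    moreover have "max (a (Suc k)) (b (Suc k)) \<le> min (a k) (b k)"
      using interlace[of k] Suc.prems False by simp
    ultimately show ?thesis by linarith
  qed
qed

lemma partial_gap_full: "partial_gap w a b n t = 0"
proof -
  have "(\<Sum>i=1..n. w i * ((a i)\<^sup>2 - (b i)\<^sup>2)) = 0" "(\<Sum>i=1..n. w i * (a i - b i)) = 0"
    using moment1 moment2 by (simp_all add: sum_subtractf right_diff_distrib)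
  then show ?thesis by (simp add: partial_gap_affine)
qed

(* The partial hypothesis is exactly L_j(m_{j+1}) >= 0. *)
lemma partial_gap_next_mid:
  assumes "1 \<le> j" "j < n"
  shows "partial_gap w a b j (mid (j + 1)) \<ge> 0"
proof -
  have "partial_gap w a b j (mid (j + 1))
      = (\<Sum>i=1..j. w i * (a i - a (j + 1)) * (a i - b (j + 1)))
        - (\<Sum>i=1..j. w i * (b i - a (j + 1)) * (b i - b (j + 1)))"
    unfolding partial_gap_def sum_subtractf[symmetric]
    by (rule sum.cong) (auto simp: power2_eq_square field_simps)
  then show ?thesis using partial[OF assms] by simp
qed

(* The j-th summand vanishes at m_j, so L_j(m_j) = L_{j-1}(m_j) >= 0. *)
lemma partial_gap_own_mid:
  assumes "1 \<le> j" "j \<le> n"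
  shows "partial_gap w a b j (mid j) \<ge> 0"
proof -
  obtain k where j: "j = Suc k" using assms by (cases j) auto
  have "(a j - mid j)\<^sup>2 - (b j - mid j)\<^sup>2 = 0"
    by (simp add: power2_eq_square field_simps)
  then have "partial_gap w a b j (mid j) = partial_gap w a b k (mid (k + 1))"
    by (simp add: j partial_gap_Suc)
  moreover have "partial_gap w a b k (mid (k + 1)) \<ge> 0"
    using partial_gap_next_mid[of k] assms j by (cases "k = 0") (simp_all add: partial_gap_def)
  ultimately show ?thesis by simp
qed

lemma partial_gap_nonneg:
  assumes "j \<le> n" "1 \<le> j \<Longrightarrow> t \<le> mid j" "j < n \<Longrightarrow> mid (j + 1) \<le> t"
  shows "partial_gap w a b j t \<ge> 0"
proof (cases "j = 0 \<or> j = n")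
  case True
  then show ?thesis using partial_gap_full[of t] by (auto simp: partial_gap_def)
next
  case False
  then show ?thesis
    using affine_nonneg_between[of "mid (j + 1)" t "mid j"]
      partial_gap_own_mid[of j] partial_gap_next_mid[of j] assms
    by (simp add: partial_gap_affine)
qed

lemma truncated_gap_split:
  assumes "k \<le> n" "\<forall>i\<in>{1..k}. t < min (a i) (b i)"
  shows "truncated_gap w a b n t
           = partial_gap w a b k t + (\<Sum>i=k+1..n. w i * ((max (a i - t) 0)\<^sup>2 - (max (b i - t) 0)\<^sup>2))"
proof -
  have "(\<Sum>i=1..k. w i * ((max (a i - t) 0)\<^sup>2 - (max (b i - t) 0)\<^sup>2)) = partial_gap w a b k t"
    unfolding partial_gap_def
  proof (rule sum.cong)
    fix i assume "i \<in> {1..k}"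
    then have "t < a i" "t < b i" using assms by auto
    then show "w i * ((max (a i - t) 0)\<^sup>2 - (max (b i - t) 0)\<^sup>2)
             = w i * ((a i - t)\<^sup>2 - (b i - t)\<^sup>2)" by (simp add: max_def)
  qed simp
  moreover have "{1..n} = {1..k} \<union> {k+1..n}" "{1..k} \<inter> {k+1..n} = {}" using assms by auto
  ultimately show ?thesis unfolding truncated_gap_def by (simp add: sum.union_disjoint)
qed

lemma truncated_gap_tail:
  assumes "1 \<le> p" "p \<le> n" "min (a p) (b p) \<le> t"
  shows "(\<Sum>i=p+1..n. w i * ((max (a i - t) 0)\<^sup>2 - (max (b i - t) 0)\<^sup>2)) = 0"
proof (rule sum.neutral, intro ballI)
  fix i assume "i \<in> {p+1..n}"
  then have "max (a i) (b i) \<le> min (a p) (b p)" using interlace_trans[of p i] assms by simp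
  then have "a i \<le> t" "b i \<le> t" using assms by auto
  then show "w i * ((max (a i - t) 0)\<^sup>2 - (max (b i - t) 0)\<^sup>2) = 0"
    using assms by (simp add: max_def)
qed

(* Either pair p lies entirely below t and only L_k(t) remains, or t crosses
   pair p and the crossing lemma applies with L_k and L_p = L_k + (p-th term). *)
lemma boundary_term_nonneg:
  assumes kn: "k < n" and above_k: "1 \<le> k \<Longrightarrow> t < min (a k) (b k)"
    and p: "p = k + 1" "min (a p) (b p) \<le> t"
  shows "partial_gap w a b k t + w p * ((max (a p - t) 0)\<^sup>2 - (max (b p - t) 0)\<^sup>2) \<ge> 0"
proof -
  have p_below_k: "1 \<le> k \<Longrightarrow> max (a p) (b p) \<le> mid k"
    using interlace_trans[of k p] kn p by auto
  have upper: "partial_gap w a b k u \<ge> 0" if "mid p \<le> u" "u \<le> max (a p) (b p)" for u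
    using partial_gap_nonneg[of k u] kn p p_below_k that by force
  show ?thesis
  proof (cases "max (a p) (b p) \<le> t")
    case True
    have "1 \<le> k \<Longrightarrow> t \<le> mid k" using above_k by auto
    then have "partial_gap w a b k t \<ge> 0"
      using partial_gap_nonneg[of k t] kn True p by simp
    moreover have "a p \<le> t" "b p \<le> t" using True by auto
    ultimately show ?thesis by simp
  next
    case crossing: False
    have lower: "partial_gap w a b p u \<ge> 0" if "min (a p) (b p) \<le> u" "u \<le> mid p" for u
    proof (rule partial_gap_nonneg)
      show "mid (p + 1) \<le> u" if "p < n"
        using interlace_trans[of p "p + 1"] p \<open>p < n\<close> \<open>min (a p) (b p) \<le> u\<close>
        by (auto simp: min_def split: if_splits)
    qed (use kn p that in auto)
    define A where "A = (\<Sum>i=1..k. w i * ((a i)\<^sup>2 - (b i)\<^sup>2))"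
    define B where "B = 2 * (\<Sum>i=1..k. w i * (a i - b i))"
    have Lk: "partial_gap w a b k u = A - u * B" for u
      unfolding partial_gap_affine A_def B_def ..
    have Lp: "partial_gap w a b p u = A - u * B + w p * ((a p - u)\<^sup>2 - (b p - u)\<^sup>2)" for u
      using partial_gap_Suc[of w a b k u] Lk by (simp add: p)
    have "A - t * B + w p * ((max (a p - t) 0)\<^sup>2 - (max (b p - t) 0)\<^sup>2) \<ge> 0"
      by (rule crossing_term_nonneg) (use p crossing upper lower Lk Lp in auto)
    then show ?thesis using Lk by simp
  qed
qed

(* Main estimate: Phi(t) >= 0 for every t.  Split off the maximal prefix of pairs
   lying above t; everything after its first successor vanishes. *)
theorem truncated_gap_nonneg: "truncated_gap w a b n t \<ge> 0"
proof -
  obtain k where k: "k \<le> n" "\<forall>i\<in>{1..k}. t < min (a i) (b i)"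
    and next_below: "k < n \<Longrightarrow> min (a (k + 1)) (b (k + 1)) \<le> t"
    using maximal_prefix[where P = "\<lambda>i. t < min (a i) (b i)" and n = n] by (auto simp: not_less)
  show ?thesis
  proof (cases "k = n")
    case True
    then show ?thesis using truncated_gap_split[OF k] by (simp add: partial_gap_full)
  next
    case False
    define p where "p = k + 1"
    have p: "1 \<le> p" "p \<le> n" "min (a p) (b p) \<le> t" using False k next_below by (auto simp: p_def)
    have split: "{k+1..n} = {p} \<union> {p+1..n}" "{p} \<inter> {p+1..n} = {}" using p by (auto simp: p_def)
    have "truncated_gap w a b n t
        = partial_gap w a b k t + w p * ((max (a p - t) 0)\<^sup>2 - (max (b p - t) 0)\<^sup>2)"
      using truncated_gap_split[OF k] truncated_gap_tail[OF p] unfolding split by simp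
    moreover have "\<dots> \<ge> 0"
      using boundary_term_nonneg[of k t p] False k p by (simp add: p_def)
    ultimately show ?thesis by simp
  qed
qed
end

(* Write f = T + R with T the Taylor quadratic at lo: the T-parts cancel by the
   moment conditions, and the weighted difference of the remainders R is the
   integral of Phi(t) f'''(t) / 2 >= 0. *)
theorem mainTheorem11:
  fixes n :: nat and w a b :: "nat \<Rightarrow> real" and lo hi :: real
    and f f' f'' f''' :: "real \<Rightarrow> real"
  assumes range_a: "\<And>i. i \<in> {1..n} \<Longrightarrow> a i \<in> {lo..hi}"
    and range_b: "\<And>i. i \<in> {1..n} \<Longrightarrow> b i \<in> {lo..hi}"
    and mono_a: "\<And>i. 1 \<le> i \<Longrightarrow> i < n \<Longrightarrow> a (i + 1) \<le> a i"
    and mono_b: "\<And>i. 1 \<le> i \<Longrightarrow> i < n \<Longrightarrow> b (i + 1) \<le> b i"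
    and interlace: "\<And>i. 1 \<le> i \<Longrightarrow> i < n \<Longrightarrow>
                       min (a i) (b i) \<ge> max (a (i + 1)) (b (i + 1))"
    and sum1: "(\<Sum>i=1..n. w i * a i) = (\<Sum>i=1..n. w i * b i)"
    and sum2: "(\<Sum>i=1..n. w i * (a i)\<^sup>2) = (\<Sum>i=1..n. w i * (b i)\<^sup>2)"
    and partial: "\<And>j. 1 \<le> j \<Longrightarrow> j < n \<Longrightarrow>
         (\<Sum>i=1..j. w i * (a i - a (j + 1)) * (a i - b (j + 1)))
           \<ge> (\<Sum>i=1..j. w i * (b i - a (j + 1)) * (b i - b (j + 1)))"
    and d1: "\<And>x. x \<in> {lo..hi} \<Longrightarrow> (f has_real_derivative f' x) (at x within {lo..hi})"
    and d2: "\<And>x. x \<in> {lo..hi} \<Longrightarrow> (f' has_real_derivative f'' x) (at x within {lo..hi})"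
    and d3: "\<And>x. x \<in> {lo..hi} \<Longrightarrow> (f'' has_real_derivative f''' x) (at x within {lo..hi})"
    and f3_nonneg: "\<And>x. x \<in> {lo..hi} \<Longrightarrow> f''' x \<ge> 0"
  shows "(\<Sum>i=1..n. w i * f (a i)) \<ge> (\<Sum>i=1..n. w i * f (b i))"
proof -
  interpret interlaced_moments n w a b
    using interlace sum1 sum2 partial by unfold_locales
  define T where "T x = f lo + f' lo * (x - lo) + f'' lo / 2 * (x - lo)\<^sup>2" for x
  define R where "R x = f x - T x" for x
  have T_cancels: "(\<Sum>i=1..n. w i * T (a i)) = (\<Sum>i=1..n. w i * T (b i))"
    unfolding T_def by (rule quadratic_moments_equal[OF sum1 sum2])
  have remainder: "((\<lambda>t. truncated_gap w a b n t * (f''' t / 2)) has_integral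
      (\<Sum>i=1..n. w i * (R (a i) - R (b i)))) {lo..hi}"
    unfolding truncated_gap_def sum_distrib_right
  proof (rule has_integral_sum[OF finite_atLeastAtMost])
    fix i assume "i \<in> {1..n}"
    then have "((\<lambda>t. w i * ((max (a i - t) 0)\<^sup>2 / 2 * f''' t - (max (b i - t) 0)\<^sup>2 / 2 * f''' t))
        has_integral w i * (R (a i) - R (b i))) {lo..hi}"
      unfolding R_def T_def
      by (intro has_integral_mult_right has_integral_diff
            taylor2_truncated_remainder[OF d1 d2 d3] range_a range_b)
    then show "((\<lambda>t. w i * ((max (a i - t) 0)\<^sup>2 - (max (b i - t) 0)\<^sup>2) * (f''' t / 2))
        has_integral w i * (R (a i) - R (b i))) {lo..hi}"
      by (simp add: algebra_simps)
  qed
  have "0 \<le> (\<Sum>i=1..n. w i * (R (a i) - R (b i)))"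
    by (rule has_integral_nonneg[OF remainder])
      (simp add: truncated_gap_nonneg f3_nonneg)
  then show ?thesis
    using T_cancels by (simp add: R_def right_diff_distrib sum_subtractf)
qed

end
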